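(* In any $(m_A,m_B,2,2)$-scenario, every unbiased quantum behavior is a Gram-Lorentz behavior.
   Context: In an $(m_A,m_B,o_A,o_B)$-scenario a behavior is a vector $\mathbf{p}=(p(ab|xy))$ indexed by $a\in[o_A]$, $b\in[o_B]$, $x\in[m_A]$, $y\in[m_B]$ (for $o_A=o_B=2$ the outcomes are labelled $a,b\in\{\pm1\}$). It is quantum if there exist $d\ge1$, a Hermitian positive semidefinite trace-one matrix $\rho$ on $\mathbb{C}^d\otimes\mathbb{C}^d$, and for each $x$ Hermitian psd $d\times d$ matrices $\{M_{a|x}\}_a$ with $\sum_aM_{a|x}=I_d$, and for each $y$ Hermitian psd $d\times d$ matrices $\{N_{b|y}\}_b$ with $\sum_bN_{b|y}=I_d$, such that $p(ab|xy)=\mathrm{Tr}((M_{a|x}\otimes N_{b|y})\rho)$ for all $a,b,x,y$. For quantum behaviors the marginals $p_A(a|x):=\sum_bp(ab|xy)$ and $p_B(b|y):=\sum_ap(ab|xy)$ do not depend on $y$, resp. $x$; in the binary-outcome case $\mathbf{p}$ is unbiased if $p_A(a|x)=p_B(b|y)=1/2$ for all $a,b,x,y$. Let $N:=m_Ao_A+m_Bo_B$ and let $\mathcal{A}(\mathbf{p})$ be the set of real symmetric $N\times N$ matrices $R$ indexed by $([m_A]\times[o_A])\cup([m_B]\times[o_B])$ with $\sum_{a,a'}R_{xa,x'a'}=1$ for all $x,x'\in[m_A]$, $\sum_{a,b}R_{xa,yb}=1$ for all $x\in[m_A],y\in[m_B]$, $\sum_{b,b'}R_{yb,y'b'}=1$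 for all $y,y'\in[m_B]$, and $R_{xa,yb}=p(ab|xy)$ for all $a,b,x,y$. With the Lorentz cone $\mathcal{L}_m:=\{(c,x)\in\mathbb{R}\times\mathbb{R}^{m-1}:c\ge\|x\|\}$, a matrix is Gram-Lorentz if it is the Gram matrix of vectors in some $\mathcal{L}_m$. A quantum behavior $\mathbf{p}$ is a Gram-Lorentz behavior if there exists a Gram-Lorentz matrix $R\in\mathcal{A}(\mathbf{p})$. *)

theory Defs
  imports Complex_Main
begin

definition psd_on :: "'i set \<Rightarrow> ('i \<Rightarrow> 'i \<Rightarrow> complex) \<Rightarrow> bool" where
  "psd_on S A \<longleftrightarrow>
     (\<forall>i\<in>S. \<forall>j\<in>S. A i j = cnj (A j i)) \<and>
     (\<forall>v :: 'i \<Rightarrow> complex. 0 \<le> Re (\<Sum>i\<in>S. \<Sum>j\<in>S. cnj (v i) * A i j * v j))"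

(* Behaviors: p a b x y = p(ab|xy); outcome sets OA, OB; inputs x < mA, y < mB. *)
definition quantum_behavior ::
  "nat \<Rightarrow> nat \<Rightarrow> 'o set \<Rightarrow> 'o set \<Rightarrow> ('o \<Rightarrow> 'o \<Rightarrow> nat \<Rightarrow> nat \<Rightarrow> real) \<Rightarrow> bool" where
  "quantum_behavior mA mB OA OB p \<longleftrightarrow>
     (\<exists>(d::nat) (\<rho> :: nat \<times> nat \<Rightarrow> nat \<times> nat \<Rightarrow> complex)
        (M :: nat \<Rightarrow> 'o \<Rightarrow> nat \<Rightarrow> nat \<Rightarrow> complex)
        (N :: nat \<Rightarrow> 'o \<Rightarrow> nat \<Rightarrow> nat \<Rightarrow> complex).
        d \<ge> 1 \<and>
        psd_on ({..<d} \<times> {..<d}) \<rho> \<and>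
        (\<Sum>ik\<in>{..<d} \<times> {..<d}. \<rho> ik ik) = 1 \<and>
        (\<forall>x<mA. (\<forall>a\<in>OA. psd_on {..<d} (M x a)) \<and>
                 (\<forall>i<d. \<forall>j<d. (\<Sum>a\<in>OA. M x a i j) = (if i = j then 1 else 0))) \<and>
        (\<forall>y<mB. (\<forall>b\<in>OB. psd_on {..<d} (N y b)) \<and>
                 (\<forall>i<d. \<forall>j<d. (\<Sum>b\<in>OB. N y b i j) = (if i = j then 1 else 0))) \<and>
        (\<forall>a\<in>OA. \<forall>b\<in>OB. \<forall>x<mA. \<forall>y<mB.
           complex_of_real (p a b x y) =
             (\<Sum>ik\<in>{..<d} \<times> {..<d}. \<Sum>jl\<in>{..<d} \<times> {..<d}.
                M x a (fst ik) (fst jl) * N y b (snd ik) (snd jl) * \<rho> jl ik)))"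

abbreviation pm1 :: "int set" where "pm1 \<equiv> {-1, 1}"

definition unbiased :: "nat \<Rightarrow> nat \<Rightarrow> (int \<Rightarrow> int \<Rightarrow> nat \<Rightarrow> nat \<Rightarrow> real) \<Rightarrow> bool" where
  "unbiased mA mB p \<longleftrightarrow>
     (\<forall>x<mA. \<forall>y<mB. \<forall>a\<in>pm1. (\<Sum>b\<in>pm1. p a b x y) = 1/2) \<and>
     (\<forall>x<mA. \<forall>y<mB. \<forall>b\<in>pm1. (\<Sum>a\<in>pm1. p a b x y) = 1/2)"

(* Index set ([mA] x OA) \<union> ([mB] x OB), as a disjoint union: Inl (x,a) / Inr (y,b). *)
definition idx_set :: "nat \<Rightarrow> nat \<Rightarrow> 'o set \<Rightarrow> 'o set \<Rightarrow> ((nat \<times> 'o) + (nat \<times> 'o)) set" where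
  "idx_set mA mB OA OB = Inl ` ({..<mA} \<times> OA) \<union> Inr ` ({..<mB} \<times> OB)"

definition in_A ::
  "nat \<Rightarrow> nat \<Rightarrow> 'o set \<Rightarrow> 'o set \<Rightarrow> ('o \<Rightarrow> 'o \<Rightarrow> nat \<Rightarrow> nat \<Rightarrow> real)
   \<Rightarrow> ((nat \<times> 'o) + (nat \<times> 'o) \<Rightarrow> (nat \<times> 'o) + (nat \<times> 'o) \<Rightarrow> real) \<Rightarrow> bool" where
  "in_A mA mB OA OB p R \<longleftrightarrow>
     (\<forall>i\<in>idx_set mA mB OA OB. \<forall>j\<in>idx_set mA mB OA OB. R i j = R j i) \<and>
     (\<forall>x<mA. \<forall>x'<mA. (\<Sum>a\<in>OA. \<Sum>a'\<in>OA. R (Inl (x,a)) (Inl (x',a'))) = 1) \<and>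
     (\<forall>x<mA. \<forall>y<mB. (\<Sum>a\<in>OA. \<Sum>b\<in>OB. R (Inl (x,a)) (Inr (y,b))) = 1) \<and>
     (\<forall>y<mB. \<forall>y'<mB. (\<Sum>b\<in>OB. \<Sum>b'\<in>OB. R (Inr (y,b)) (Inr (y',b'))) = 1) \<and>
     (\<forall>a\<in>OA. \<forall>b\<in>OB. \<forall>x<mA. \<forall>y<mB. R (Inl (x,a)) (Inr (y,b)) = p a b x y)"

(* Lorentz cone L_m = {(c,x) \<in> \<real> \<times> \<real>^(m-1). c \<ge> ||x||}; a vector of \<real>^m is
   represented by its coordinates u 0, ..., u (m-1). *)
definition lorentz_cone :: "nat \<Rightarrow> (nat \<Rightarrow> real) set" where
  "lorentz_cone m = {u. sqrt (\<Sum>k\<in>{1..<m}. (u k)\<^sup>2) \<le> u 0}"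

definition gram_lorentz :: "'i set \<Rightarrow> ('i \<Rightarrow> 'i \<Rightarrow> real) \<Rightarrow> bool" where
  "gram_lorentz S R \<longleftrightarrow>
     (\<exists>(m::nat) (v :: 'i \<Rightarrow> nat \<Rightarrow> real). m \<ge> 1 \<and>
        (\<forall>i\<in>S. v i \<in> lorentz_cone m) \<and>
        (\<forall>i\<in>S. \<forall>j\<in>S. R i j = (\<Sum>k<m. v i k * v j k)))"

definition gram_lorentz_behavior ::
  "nat \<Rightarrow> nat \<Rightarrow> 'o set \<Rightarrow> 'o set \<Rightarrow> ('o \<Rightarrow> 'o \<Rightarrow> nat \<Rightarrow> nat \<Rightarrow> real) \<Rightarrow> bool" where
  "gram_lorentz_behavior mA mB OA OB p \<longleftrightarrow>
     quantum_behavior mA mB OA OB p \<and>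
     (\<exists>R. gram_lorentz (idx_set mA mB OA OB) R \<and> in_A mA mB OA OB p R)"

end

theory Submission
  imports Defs
begin

text \<open>Let \<open>A\<^sub>x = M(1|x) - M(-1|x)\<close> and \<open>B\<^sub>y = N(1|y) - N(-1|y)\<close>. Being differences of the two
  effects of a binary measurement, they are Hermitian contractions. Factor the state as
  \<open>\<rho> = \<Sum>\<^sub>r w\<^sub>r w\<^sub>r\<^sup>*\<close>, so that \<open>\<Sum>\<^sub>r \<parallel>w\<^sub>r\<parallel>\<^sup>2 = Tr \<rho> = 1\<close>. Then the stacked vectors
  \<open>u\<^sub>x = ((A\<^sub>x \<otimes> I) w\<^sub>r)\<^sub>r\<close> and \<open>v\<^sub>y = ((I \<otimes> B\<^sub>y) w\<^sub>r)\<^sub>r\<close> lie in the unit ball, and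
  \<open>\<langle>u\<^sub>x, v\<^sub>y\<rangle> = Tr ((A\<^sub>x \<otimes> B\<^sub>y) \<rho>)\<close> is the correlator \<open>E\<^sub>x\<^sub>y\<close>. For an unbiased behavior,
  \<open>p(ab|xy) = (1 + a b E\<^sub>x\<^sub>y) / 4\<close>, which is the inner product of the real vectors
  \<open>(1/2, a u\<^sub>x / 2)\<close> and \<open>(1/2, b v\<^sub>y / 2)\<close>. These lie in the Lorentz cone because
  \<open>\<parallel>u\<^sub>x\<parallel>, \<parallel>v\<^sub>y\<parallel> \<le> 1\<close>, and their Gram matrix is in \<open>\<A>(p)\<close>.\<close>

definition cinner :: "'i set \<Rightarrow> ('i \<Rightarrow> complex) \<Rightarrow> ('i \<Rightarrow> complex) \<Rightarrow> complex" where
  "cinner S u v = (\<Sum>i\<in>S. cnj (u i) * v i)"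

definition mat_vec :: "'i set \<Rightarrow> ('i \<Rightarrow> 'i \<Rightarrow> complex) \<Rightarrow> ('i \<Rightarrow> complex) \<Rightarrow> 'i \<Rightarrow> complex" where
  "mat_vec S A v i = (\<Sum>j\<in>S. A i j * v j)"

definition quad_form :: "'i set \<Rightarrow> ('i \<Rightarrow> 'i \<Rightarrow> complex) \<Rightarrow> ('i \<Rightarrow> complex) \<Rightarrow> complex" where
  "quad_form S A v = (\<Sum>i\<in>S. \<Sum>j\<in>S. cnj (v i) * A i j * v j)"

lemma Re_cinner_self: "Re (cinner S u u) = (\<Sum>i\<in>S. (cmod (u i))\<^sup>2)"
proof -
  have "cnj (u i) * u i = of_real ((cmod (u i))\<^sup>2)" for i
    using complex_norm_square[of "u i"] by (simp add: mult.commute)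
  then show ?thesis unfolding cinner_def by simp
qed

lemma cinner_minus_left: "cinner S (\<lambda>i. - u i) v = - cinner S u v"
  unfolding cinner_def by (simp add: sum_negf)

lemma cinner_minus_right: "cinner S u (\<lambda>i. - v i) = - cinner S u v"
  unfolding cinner_def by (simp add: sum_negf)

lemma quad_form_eq_cinner: "quad_form S A v = cinner S v (mat_vec S A v)"
  unfolding quad_form_def cinner_def mat_vec_def by (simp add: sum_distrib_left mult.assoc)

lemma psd_on_quad_form_nonneg: "psd_on S A \<Longrightarrow> 0 \<le> Re (quad_form S A v)"
  unfolding psd_on_def quad_form_def by blast

lemma psd_on_hermitian: "psd_on S A \<Longrightarrow> i \<in> S \<Longrightarrow> j \<in> S \<Longrightarrow> A i j = cnj (A j i)"
  unfolding psd_on_def by blast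

lemma quad_form_cong: "(\<And>i. i \<in> S \<Longrightarrow> v i = v' i) \<Longrightarrow> quad_form S A v = quad_form S A v'"
  unfolding quad_form_def by (auto intro!: sum.cong)

lemma quad_form_restrict:
  assumes "finite T" "U \<subseteq> T" "\<And>i. i \<in> T - U \<Longrightarrow> v i = 0"
  shows "quad_form T A v = quad_form U A v"
proof -
  have "quad_form T A v = (\<Sum>i\<in>U. \<Sum>j\<in>T. cnj (v i) * A i j * v j)"
    unfolding quad_form_def by (rule sum.mono_neutral_right) (use assms in auto)
  also have "\<dots> = quad_form U A v"
    unfolding quad_form_def
    by (rule sum.cong[OF refl], rule sum.mono_neutral_right) (use assms in auto)
  finally show ?thesis .
qed

lemma quad_form_insert:
  assumes "finite S" "s \<notin> S"
  shows "quad_form (insert s S) A v = cnj (v s) * A s s * v s + cnj (v s) * (\<Sum>b\<in>S. A s b * v b)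
      + (\<Sum>a\<in>S. cnj (v a) * A a s) * v s + quad_form S A v"
  using assms unfolding quad_form_def
  by (simp add: sum.distrib sum_distrib_left sum_distrib_right algebra_simps)

lemma quad_form_rank_one_update:
  "quad_form S (\<lambda>a b. A a b - w a * cnj (w b)) v = quad_form S A v - cnj (cinner S w v) * cinner S w v"
  unfolding quad_form_def cinner_def cnj_sum sum_product
  by (simp add: algebra_simps sum_subtractf)

lemma psd_on_diag:
  assumes "psd_on T A" "finite T" "s \<in> T"
  shows "A s s = of_real (Re (A s s))" "0 \<le> Re (A s s)"
proof -
  show "A s s = of_real (Re (A s s))"
    using psd_on_hermitian[OF assms(1,3,3)] by (simp add: complex_eq_iff)
  have "quad_form T A (\<lambda>i. if i = s then 1 else 0) = A s s"
    using assms by (subst quad_form_restrict[where U = "{s}"]) (auto simp: quad_form_def)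
  then show "0 \<le> Re (A s s)"
    using psd_on_quad_form_nonneg[OF assms(1)] by metis
qed

text \<open>Evaluate the form at \<open>e\<^sub>a - t cnj (A a s) e\<^sub>s\<close> for large \<open>t\<close>.\<close>
lemma psd_on_zero_diag_imp_zero:
  assumes "psd_on T A" "finite T" "a \<in> T" "s \<in> T" "a \<noteq> s" "A s s = 0"
  shows "A a s = 0"
proof (rule ccontr)
  let ?c = "A a s"
  assume c: "?c \<noteq> 0"
  have Asa: "A s a = cnj ?c" using psd_on_hermitian[OF assms(1,4,3)] .
  define t where "t = (Re (A a a) + 1) / (2 * (cmod ?c)\<^sup>2)"
  define v where "v i = (if i = a then 1 else if i = s then - of_real t * cnj ?c else 0)" for i
  have "quad_form T A v = cnj (v a) * A a a * v a + cnj (v a) * A a s * v s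
      + cnj (v s) * A s a * v a + cnj (v s) * A s s * v s"
    using assms unfolding v_def
    by (subst quad_form_restrict[where U = "{a, s}"]) (auto simp: quad_form_def)
  also have "\<dots> = A a a - 2 * of_real t * (?c * cnj ?c)"
    using Asa assms(5,6) by (simp add: v_def algebra_simps)
  also have "?c * cnj ?c = of_real ((cmod ?c)\<^sup>2)" using complex_norm_square[of ?c] by simp
  finally have "0 \<le> Re (A a a) - 2 * t * (cmod ?c)\<^sup>2"
    using psd_on_quad_form_nonneg[OF assms(1), of v] by simp
  also have "2 * t * (cmod ?c)\<^sup>2 = Re (A a a) + 1" unfolding t_def using c by simp
  finally show False by simp
qed

section \<open>Cholesky factorisation\<close>

definition pivot_column :: "('i \<Rightarrow> 'i \<Rightarrow> complex) \<Rightarrow> 'i \<Rightarrow> 'i \<Rightarrow> complex" where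
  "pivot_column A s a = (if 0 < Re (A s s) then A a s / of_real (sqrt (Re (A s s))) else 0)"

lemma psd_on_pivot_column:
  assumes psd: "psd_on T A" and "finite T" and ab: "a \<in> T" "b \<in> T" and s: "a = s \<or> b = s"
  shows "A a b = pivot_column A s a * cnj (pivot_column A s b)"
proof -
  have sT: "s \<in> T" using ab s by auto
  have herm: "A i j = cnj (A j i)" if "i \<in> T" "j \<in> T" for i j
    using psd_on_hermitian[OF psd that] .
  show ?thesis
  proof (cases "0 < Re (A s s)")
    case True
    define r where "r = sqrt (Re (A s s))"
    have r: "0 < r" "of_real r * of_real r = A s s"
      using True psd_on_diag[OF psd \<open>finite T\<close> sT]
      by (auto simp: r_def simp flip: of_real_mult)
    have nz: "A s s \<noteq> 0" using r by (metis mult_eq_0_iff of_real_eq_0_iff less_irrefl)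
    have col: "pivot_column A s i = A i s / of_real r" for i
      using True by (simp add: pivot_column_def r_def)
    from s show ?thesis
    proof
      assume "a = s"
      then show ?thesis using r nz herm[OF ab(2) sT] by (simp add: col field_simps)
    next
      assume "b = s"
      then show ?thesis using r nz herm[OF sT sT] by (simp add: col field_simps)
    qed
  next
    case False
    then have "A s s = 0" using psd_on_diag[OF psd \<open>finite T\<close> sT] by (metis less_eq_real_def of_real_0)
    then have "A c s = 0" if "c \<in> T" for c
      using psd_on_zero_diag_imp_zero[OF psd \<open>finite T\<close> that sT] by (cases "c = s") auto
    then show ?thesis using s ab herm[OF ab] False by (auto simp: pivot_column_def)
  qed
qed

text \<open>The chosen value of \<open>v s\<close> minimises the form in that coordinate; the minimum is the
  Schur complement form.\<close>
lemma quad_form_eliminate_pivot: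
  assumes "finite S" "s \<notin> S" and pos: "0 < Re (A s s)" and Ass: "A s s = of_real (Re (A s s))"
    and herm: "\<And>a. a \<in> S \<Longrightarrow> A a s = cnj (A s a)"
  shows "quad_form (insert s S) A (v(s := - (\<Sum>b\<in>S. A s b * v b) / A s s))
       = quad_form S (\<lambda>a b. A a b - pivot_column A s a * cnj (pivot_column A s b)) v"
proof -
  define t where "t = (\<Sum>b\<in>S. A s b * v b)"
  define \<alpha> where "\<alpha> = Re (A s s)"
  define v' where "v' = v(s := - t / A s s)"
  have \<alpha>: "A s s = of_real \<alpha>" "0 < \<alpha>" using Ass pos by (simp_all add: \<alpha>_def)
  have row: "(\<Sum>b\<in>S. A s b * v' b) = t" unfolding t_def v'_def
    by (rule sum.cong) (use assms in auto)
  have col: "(\<Sum>a\<in>S. cnj (v' a) * A a s) = cnj t" unfolding t_def v'_def cnj_sum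
    by (rule sum.cong) (use assms in \<open>auto simp: mult.commute\<close>)
  have rest: "quad_form S A v' = quad_form S A v" by (rule quad_form_cong) (use assms v'_def in auto)
  have "cinner S (pivot_column A s) v = t / of_real (sqrt \<alpha>)"
    unfolding cinner_def pivot_column_def t_def using pos herm
    by (simp add: \<alpha>_def sum_divide_distrib)
  then have "cnj (cinner S (pivot_column A s) v) * cinner S (pivot_column A s) v = cnj t * t / of_real \<alpha>"
    using \<alpha> by (simp flip: of_real_mult)
  moreover have "quad_form (insert s S) A v' = quad_form S A v - cnj t * t / of_real \<alpha>"
  proof -
    have vs: "v' s = - t / of_real \<alpha>" "cnj (v' s) = - cnj t / of_real \<alpha>"
      using \<alpha> by (simp_all add: v'_def)
    have "quad_form (insert s S) A v'
        = cnj (v' s) * of_real \<alpha> * v' s + cnj (v' s) * t + cnj t * v' s + quad_form S A v"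
      using quad_form_insert[OF assms(1,2), of A v'] row col rest \<alpha> by simp
    also have "\<dots> = cnj t * t / of_real \<alpha> - 2 * (cnj t * t / of_real \<alpha>) + quad_form S A v"
      unfolding vs using \<alpha> by (simp add: field_simps)
    finally show ?thesis by simp
  qed
  ultimately show ?thesis
    unfolding quad_form_rank_one_update by (simp add: v'_def t_def)
qed

lemma psd_on_Schur_complement:
  assumes fin: "finite S" and s: "s \<notin> S" and psd: "psd_on (insert s S) A"
  shows "psd_on S (\<lambda>a b. A a b - pivot_column A s a * cnj (pivot_column A s b))"
  unfolding psd_on_def
proof (intro conjI ballI allI)
  fix i j assume "i \<in> S" "j \<in> S"
  then have "A i j = cnj (A j i)" using psd_on_hermitian[OF psd] by blast
  then show "A i j - pivot_column A s i * cnj (pivot_column A s j)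
      = cnj (A j i - pivot_column A s j * cnj (pivot_column A s i))"
    by (simp add: mult.commute)
next
  fix v :: "'a \<Rightarrow> complex"
  let ?B = "\<lambda>a b. A a b - pivot_column A s a * cnj (pivot_column A s b)"
  have "\<exists>v'. quad_form S ?B v = quad_form (insert s S) A v'"
  proof (cases "0 < Re (A s s)")
    case True
    have "A s s = of_real (Re (A s s))" using psd_on_diag(1)[OF psd] fin by simp
    moreover have "\<And>a. a \<in> S \<Longrightarrow> A a s = cnj (A s a)"
      using psd_on_hermitian[OF psd] by blast
    ultimately have "quad_form (insert s S) A (v(s := - (\<Sum>b\<in>S. A s b * v b) / A s s)) = quad_form S ?B v"
      by (rule quad_form_eliminate_pivot[of S s A, OF fin s True])
    then show ?thesis by metis
  next
    case False
    then have "quad_form S ?B v = quad_form S A v" by (simp add: pivot_column_def quad_form_def)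
    also have "\<dots> = quad_form S A (v(s := 0))" by (rule quad_form_cong) (use s in auto)
    also have "\<dots> = quad_form (insert s S) A (v(s := 0))"
      by (rule quad_form_restrict[symmetric]) (use fin in auto)
    finally show ?thesis by blast
  qed
  then obtain v' where "quad_form S ?B v = quad_form (insert s S) A v'" ..
  then show "0 \<le> Re (\<Sum>i\<in>S. \<Sum>j\<in>S. cnj (v i) * ?B i j * v j)"
    using psd_on_quad_form_nonneg[OF psd, of v'] by (simp only: quad_form_def)
qed

text \<open>Peel off the pivot column and recurse on the Schur complement.\<close>
lemma psd_on_gram_factorization:
  "finite S \<Longrightarrow> psd_on S A \<Longrightarrow> \<exists>(m::nat) W. \<forall>a\<in>S. \<forall>b\<in>S. A a b = (\<Sum>k<m. W a k * cnj (W b k))"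
proof (induction S arbitrary: A rule: finite_induct)
  case empty
  then show ?case by auto
next
  case (insert s S)
  let ?w = "pivot_column A s"
  obtain m :: nat and W' where W': "\<forall>a\<in>S. \<forall>b\<in>S. A a b - ?w a * cnj (?w b) = (\<Sum>k<m. W' a k * cnj (W' b k))"
    using insert.IH[OF psd_on_Schur_complement[OF insert.hyps insert.prems]] by blast
  define W where "W a k = (if k = m then ?w a else if a = s then 0 else W' a k)" for a k
  have "A a b = (\<Sum>k<Suc m. W a k * cnj (W b k))" if ab: "a \<in> insert s S" "b \<in> insert s S" for a b
  proof (cases "a = s \<or> b = s")
    case True
    then have "(\<Sum>k<m. W a k * cnj (W b k)) = 0" by (auto simp: W_def intro!: sum.neutral)
    then show ?thesis
      using psd_on_pivot_column[OF insert.prems _ ab True] insert.hyps by (simp add: W_def)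
  next
    case False
    then have "(\<Sum>k<m. W a k * cnj (W b k)) = A a b - ?w a * cnj (?w b)"
      using W' ab by (simp add: W_def)
    then show ?thesis by (simp add: W_def)
  qed
  then show ?case by blast
qed

section \<open>Binary measurements\<close>

definition contraction_on :: "'i set \<Rightarrow> ('i \<Rightarrow> 'i \<Rightarrow> complex) \<Rightarrow> bool" where
  "contraction_on S A \<longleftrightarrow> (\<forall>u. (\<Sum>i\<in>S. (cmod (mat_vec S A u i))\<^sup>2) \<le> (\<Sum>i\<in>S. (cmod (u i))\<^sup>2))"

lemma mat_vec_cong: "(\<And>j. j \<in> S \<Longrightarrow> u j = u' j) \<Longrightarrow> mat_vec S A u i = mat_vec S A u' i"
  unfolding mat_vec_def by simp

lemma mat_vec_add: "mat_vec S A (\<lambda>j. u j + w j) i = mat_vec S A u i + mat_vec S A w i"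
  unfolding mat_vec_def by (simp add: distrib_left sum.distrib)

lemma mat_vec_diff: "mat_vec S A (\<lambda>j. u j - w j) i = mat_vec S A u i - mat_vec S A w i"
  unfolding mat_vec_def by (simp add: right_diff_distrib sum_subtractf)

lemma mat_vec_diff_matrix: "mat_vec S (\<lambda>i j. A i j - B i j) u i = mat_vec S A u i - mat_vec S B u i"
  unfolding mat_vec_def by (simp add: left_diff_distrib sum_subtractf)

lemma mat_vec_complementary:
  assumes "finite S" "i \<in> S" and id: "\<And>i j. i \<in> S \<Longrightarrow> j \<in> S \<Longrightarrow> A i j + B i j = (if i = j then 1 else 0)"
  shows "mat_vec S A u i + mat_vec S B u i = u i"
proof -
  have "mat_vec S A u i + mat_vec S B u i = (\<Sum>j\<in>S. (A i j + B i j) * u j)"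
    unfolding mat_vec_def by (simp add: distrib_right sum.distrib)
  also have "\<dots> = (\<Sum>j\<in>S. if i = j then u j else 0)"
    by (rule sum.cong) (use id assms(2) in auto)
  finally show ?thesis using assms(1,2) by simp
qed

lemma cinner_mat_vec_hermitian:
  assumes "\<And>i j. i \<in> S \<Longrightarrow> j \<in> S \<Longrightarrow> A i j = cnj (A j i)"
  shows "cinner S (mat_vec S A u) w = cinner S u (mat_vec S A w)"
proof -
  have cnj_A: "cnj (A i j) = A j i" if "i \<in> S" "j \<in> S" for i j
    using assms[OF that(2,1)] by simp
  have "cinner S (mat_vec S A u) w = (\<Sum>i\<in>S. \<Sum>j\<in>S. cnj (u j) * A j i * w i)"
    unfolding cinner_def mat_vec_def cnj_sum sum_distrib_right
    by (intro sum.cong refl) (simp add: cnj_A mult.assoc mult.left_commute)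
  also have "\<dots> = (\<Sum>j\<in>S. \<Sum>i\<in>S. cnj (u j) * A j i * w i)" by (rule sum.swap)
  also have "\<dots> = cinner S u (mat_vec S A w)"
    unfolding cinner_def mat_vec_def by (simp add: sum_distrib_left mult.assoc)
  finally show ?thesis .
qed

definition binary_povm :: "'i set \<Rightarrow> ('i \<Rightarrow> 'i \<Rightarrow> complex) \<Rightarrow> ('i \<Rightarrow> 'i \<Rightarrow> complex) \<Rightarrow> bool" where
  "binary_povm S M1 M2 \<longleftrightarrow> psd_on S M1 \<and> psd_on S M2 \<and>
     (\<forall>i\<in>S. \<forall>j\<in>S. M1 i j + M2 i j = (if i = j then 1 else 0))"

lemma binary_povm_difference_hermitian:
  "binary_povm S M1 M2 \<Longrightarrow> i \<in> S \<Longrightarrow> j \<in> S \<Longrightarrow> M1 i j - M2 i j = cnj (M1 j i - M2 j i)"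
  unfolding binary_povm_def using psd_on_hermitian[of S M1 i j] psd_on_hermitian[of S M2 i j] by simp

text \<open>With \<open>a = M\<^sub>1 u\<close> and \<open>b = M\<^sub>2 u\<close> we have \<open>u = a + b\<close>, and since \<open>M\<^sub>1\<close> and \<open>M\<^sub>2 = I - M\<^sub>1\<close>
  commute, \<open>\<langle>a, b\<rangle> = \<langle>a, M\<^sub>2 a\<rangle> + \<langle>b, M\<^sub>1 b\<rangle> \<ge> 0\<close>; hence
  \<open>\<parallel>u\<parallel>\<^sup>2 = \<parallel>a - b\<parallel>\<^sup>2 + 4 Re \<langle>a, b\<rangle> \<ge> \<parallel>a - b\<parallel>\<^sup>2\<close>.\<close>
lemma binary_povm_difference_contraction:
  assumes fin: "finite S" and povm: "binary_povm S M1 M2"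
  shows "contraction_on S (\<lambda>i j. M1 i j - M2 i j)"
  unfolding contraction_on_def
proof
  fix u
  have psd1: "psd_on S M1" and psd2: "psd_on S M2"
    and id: "\<And>i j. i \<in> S \<Longrightarrow> j \<in> S \<Longrightarrow> M1 i j + M2 i j = (if i = j then 1 else 0)"
    using povm by (auto simp: binary_povm_def)
  define a where "a = mat_vec S M1 u"
  define b where "b = mat_vec S M2 u"
  have u: "u i = a i + b i" if "i \<in> S" for i
    using mat_vec_complementary[OF fin that id] by (simp add: a_def b_def)
  have compl: "mat_vec S M1 w i = w i - mat_vec S M2 w i" if "i \<in> S" for w i
    using mat_vec_complementary[OF fin that id, of w] by (simp add: algebra_simps)
  have commute: "mat_vec S M2 a i = mat_vec S M1 b i" if "i \<in> S" for i
  proof -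
    have "mat_vec S M2 a i = mat_vec S M2 (\<lambda>j. u j - b j) i" by (rule mat_vec_cong) (simp add: u)
    also have "\<dots> = mat_vec S M1 b i" unfolding mat_vec_diff using compl[OF that, of b] by (simp add: b_def)
    finally show ?thesis .
  qed
  have "cinner S a b = cinner S a (\<lambda>i. mat_vec S M2 a i + mat_vec S M2 b i)"
    unfolding cinner_def
  proof (rule sum.cong)
    fix i assume "i \<in> S"
    have "b i = mat_vec S M2 (\<lambda>j. a j + b j) i"
      using mat_vec_cong[of S u "\<lambda>j. a j + b j" M2 i] u by (simp add: b_def)
    then show "cnj (a i) * b i = cnj (a i) * (mat_vec S M2 a i + mat_vec S M2 b i)"
      by (simp add: mat_vec_add)
  qed simp
  also have "\<dots> = cinner S a (mat_vec S M2 a) + cinner S a (mat_vec S M2 b)"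
    unfolding cinner_def by (simp add: distrib_left sum.distrib)
  also have "cinner S a (mat_vec S M2 b) = cinner S (mat_vec S M2 a) b"
    by (rule cinner_mat_vec_hermitian[symmetric]) (use psd_on_hermitian[OF psd2] in blast)
  also have "\<dots> = cinner S (mat_vec S M1 b) b"
    unfolding cinner_def by (rule sum.cong) (simp_all add: commute)
  also have "\<dots> = cinner S b (mat_vec S M1 b)"
    by (rule cinner_mat_vec_hermitian) (use psd_on_hermitian[OF psd1] in blast)
  finally have "cinner S a b = quad_form S M2 a + quad_form S M1 b" by (simp add: quad_form_eq_cinner)
  then have nonneg: "0 \<le> Re (cinner S a b)"
    using psd_on_quad_form_nonneg[OF psd1, of b] psd_on_quad_form_nonneg[OF psd2, of a] by simp
  have parallelogram: "(cmod (z + w))\<^sup>2 = (cmod (z - w))\<^sup>2 + 4 * Re (cnj z * w)" for z w :: complex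
    unfolding cmod_power2 by (simp add: power2_eq_square algebra_simps)
  have "(\<Sum>i\<in>S. (cmod (u i))\<^sup>2) = (\<Sum>i\<in>S. (cmod (a i - b i))\<^sup>2) + 4 * Re (cinner S a b)"
    by (simp add: u parallelogram sum.distrib sum_distrib_left cinner_def)
  moreover have "mat_vec S (\<lambda>i j. M1 i j - M2 i j) u i = a i - b i" for i
    by (simp add: mat_vec_diff_matrix a_def b_def)
  ultimately show "(\<Sum>i\<in>S. (cmod (mat_vec S (\<lambda>i j. M1 i j - M2 i j) u i))\<^sup>2) \<le> (\<Sum>i\<in>S. (cmod (u i))\<^sup>2)"
    using nonneg by simp
qed

section \<open>Expectations on a bipartite system\<close>

definition tensor_left :: "nat \<Rightarrow> (nat \<Rightarrow> nat \<Rightarrow> complex) \<Rightarrow> (nat \<times> nat \<Rightarrow> complex) \<Rightarrow> nat \<times> nat \<Rightarrow> complex" where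
  "tensor_left d A w = (\<lambda>(i, l). \<Sum>j<d. A i j * w (j, l))"

definition tensor_right :: "nat \<Rightarrow> (nat \<Rightarrow> nat \<Rightarrow> complex) \<Rightarrow> (nat \<times> nat \<Rightarrow> complex) \<Rightarrow> nat \<times> nat \<Rightarrow> complex" where
  "tensor_right d B w = (\<lambda>(i, l). \<Sum>l'<d. B l l' * w (i, l'))"

text \<open>\<open>tensor_expectation d \<rho> A B = Tr ((A \<otimes> B) \<rho>)\<close>, in the form used by \<open>quantum_behavior\<close>.\<close>
definition tensor_expectation ::
  "nat \<Rightarrow> (nat \<times> nat \<Rightarrow> nat \<times> nat \<Rightarrow> complex) \<Rightarrow> (nat \<Rightarrow> nat \<Rightarrow> complex) \<Rightarrow> (nat \<Rightarrow> nat \<Rightarrow> complex) \<Rightarrow> complex" where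
  "tensor_expectation d \<rho> A B =
     (\<Sum>ik\<in>{..<d} \<times> {..<d}. \<Sum>jl\<in>{..<d} \<times> {..<d}. A (fst ik) (fst jl) * B (snd ik) (snd jl) * \<rho> jl ik)"

lemma tensor_expectation_diff_left:
  "tensor_expectation d \<rho> (\<lambda>i j. A1 i j - A2 i j) B = tensor_expectation d \<rho> A1 B - tensor_expectation d \<rho> A2 B"
  unfolding tensor_expectation_def by (simp add: left_diff_distrib sum_subtractf)

lemma tensor_expectation_diff_right:
  "tensor_expectation d \<rho> A (\<lambda>i j. B1 i j - B2 i j) = tensor_expectation d \<rho> A B1 - tensor_expectation d \<rho> A B2"
  unfolding tensor_expectation_def by (simp add: right_diff_distrib left_diff_distrib sum_subtractf)

lemma cinner_Times:
  "cinner (S \<times> T) (\<lambda>(s, t). f s t) (\<lambda>(s, t). g s t) = (\<Sum>s\<in>S. cinner T (f s) (g s))"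
  unfolding cinner_def by (simp add: sum.cartesian_product')

lemma contraction_on_tensor_left:
  assumes "contraction_on {..<d} A"
  shows "(\<Sum>c\<in>{..<d} \<times> {..<d}. (cmod (tensor_left d A w c))\<^sup>2) \<le> (\<Sum>c\<in>{..<d} \<times> {..<d}. (cmod (w c))\<^sup>2)"
proof -
  have "(\<Sum>c\<in>{..<d} \<times> {..<d}. (cmod (tensor_left d A w c))\<^sup>2)
      = (\<Sum>i<d. \<Sum>l<d. (cmod (mat_vec {..<d} A (\<lambda>j. w (j, l)) i))\<^sup>2)"
    by (simp add: sum.cartesian_product' tensor_left_def mat_vec_def)
  also have "\<dots> = (\<Sum>l<d. \<Sum>i<d. (cmod (mat_vec {..<d} A (\<lambda>j. w (j, l)) i))\<^sup>2)"
    by (rule sum.swap)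
  also have "\<dots> \<le> (\<Sum>l<d. \<Sum>i<d. (cmod (w (i, l)))\<^sup>2)"
    using assms unfolding contraction_on_def by (blast intro: sum_mono)
  also have "\<dots> = (\<Sum>c\<in>{..<d} \<times> {..<d}. (cmod (w c))\<^sup>2)"
    unfolding sum.cartesian_product' by (rule sum.swap)
  finally show ?thesis .
qed

lemma contraction_on_tensor_right:
  assumes "contraction_on {..<d} B"
  shows "(\<Sum>c\<in>{..<d} \<times> {..<d}. (cmod (tensor_right d B w c))\<^sup>2) \<le> (\<Sum>c\<in>{..<d} \<times> {..<d}. (cmod (w c))\<^sup>2)"
proof -
  have "(\<Sum>c\<in>{..<d} \<times> {..<d}. (cmod (tensor_right d B w c))\<^sup>2)
      = (\<Sum>i<d. \<Sum>l<d. (cmod (mat_vec {..<d} B (\<lambda>l'. w (i, l')) l))\<^sup>2)"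
    by (simp add: sum.cartesian_product' tensor_right_def mat_vec_def)
  also have "\<dots> \<le> (\<Sum>i<d. \<Sum>l<d. (cmod (w (i, l)))\<^sup>2)"
    using assms unfolding contraction_on_def by (blast intro: sum_mono)
  also have "\<dots> = (\<Sum>c\<in>{..<d} \<times> {..<d}. (cmod (w c))\<^sup>2)"
    by (simp add: sum.cartesian_product')
  finally show ?thesis .
qed

lemma Re_cinner_tensor_left_le:
  assumes "contraction_on {..<d} A"
  shows "Re (cinner ({..<m} \<times> ({..<d} \<times> {..<d})) (\<lambda>(r, c). tensor_left d A (w r) c)
                                                   (\<lambda>(r, c). tensor_left d A (w r) c))
    \<le> (\<Sum>r<m. \<Sum>c\<in>{..<d} \<times> {..<d}. (cmod (w r c))\<^sup>2)"
  unfolding cinner_Times Re_sum Re_cinner_self by (intro sum_mono contraction_on_tensor_left assms)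

lemma Re_cinner_tensor_right_le:
  assumes "contraction_on {..<d} B"
  shows "Re (cinner ({..<m} \<times> ({..<d} \<times> {..<d})) (\<lambda>(r, c). tensor_right d B (w r) c)
                                                   (\<lambda>(r, c). tensor_right d B (w r) c))
    \<le> (\<Sum>r<m. \<Sum>c\<in>{..<d} \<times> {..<d}. (cmod (w r c))\<^sup>2)"
  unfolding cinner_Times Re_sum Re_cinner_self by (intro sum_mono contraction_on_tensor_right assms)

lemma sum_swap_outer_inner:
  "(\<Sum>i\<in>A. \<Sum>k\<in>B. \<Sum>j\<in>C. F i k j) = (\<Sum>j\<in>C. \<Sum>k\<in>B. \<Sum>i\<in>A. F i k j)"
proof -
  have "(\<Sum>i\<in>A. \<Sum>k\<in>B. \<Sum>j\<in>C. F i k j) = (\<Sum>i\<in>A. \<Sum>j\<in>C. \<Sum>k\<in>B. F i k j)"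
    by (rule sum.cong[OF refl], rule sum.swap)
  also have "\<dots> = (\<Sum>j\<in>C. \<Sum>i\<in>A. \<Sum>k\<in>B. F i k j)" by (rule sum.swap)
  also have "\<dots> = (\<Sum>j\<in>C. \<Sum>k\<in>B. \<Sum>i\<in>A. F i k j)"
    by (rule sum.cong[OF refl], rule sum.swap)
  finally show ?thesis .
qed

lemma tensor_expectation_gram:
  assumes \<rho>: "\<forall>a\<in>{..<d} \<times> {..<d}. \<forall>b\<in>{..<d} \<times> {..<d}. \<rho> a b = (\<Sum>r<m. W a r * cnj (W b r))"
    and herm: "\<And>i j. i < d \<Longrightarrow> j < d \<Longrightarrow> A i j = cnj (A j i)"
  shows "tensor_expectation d \<rho> A B
       = (\<Sum>r<m. cinner ({..<d} \<times> {..<d}) (tensor_left d A (\<lambda>c. W c r)) (tensor_right d B (\<lambda>c. W c r)))"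
proof -
  have cnj_A: "cnj (A j i) = A i j" if "i < d" "j < d" for i j using herm[OF that] by simp
  have "tensor_expectation d \<rho> A B
      = (\<Sum>i<d. \<Sum>k<d. \<Sum>j<d. \<Sum>l<d. \<Sum>r<m. A i j * B k l * (W (j, l) r * cnj (W (i, k) r)))"
    unfolding tensor_expectation_def sum.cartesian_product'
    by (intro sum.cong refl) (simp add: \<rho> sum_distrib_left)
  also have "\<dots> = (\<Sum>r<m. \<Sum>i<d. \<Sum>k<d. \<Sum>j<d. \<Sum>l<d. A i j * B k l * (W (j, l) r * cnj (W (i, k) r)))"
    by (simp only: sum.swap[where B = "{..<m}"])
  also have "\<dots> = (\<Sum>r<m. \<Sum>j<d. \<Sum>k<d. \<Sum>i<d. \<Sum>l<d. A i j * B k l * (W (j, l) r * cnj (W (i, k) r)))"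
    by (rule sum.cong[OF refl], rule sum_swap_outer_inner)
  also have "\<dots> = (\<Sum>r<m. cinner ({..<d} \<times> {..<d}) (tensor_left d A (\<lambda>c. W c r)) (tensor_right d B (\<lambda>c. W c r)))"
    unfolding cinner_def sum.cartesian_product' tensor_left_def tensor_right_def
    by (intro sum.cong refl) (simp add: sum_distrib_left sum_distrib_right cnj_A algebra_simps)
  finally show ?thesis .
qed

lemma gram_trace:
  assumes \<rho>: "\<forall>a\<in>S. \<forall>b\<in>S. \<rho> a b = (\<Sum>r<m. W a r * cnj (W b r))"
  shows "(\<Sum>c\<in>S. \<rho> c c) = of_real (\<Sum>r<m. \<Sum>c\<in>S. (cmod (W c r))\<^sup>2)"
proof -
  have "(\<Sum>c\<in>S. \<rho> c c) = (\<Sum>c\<in>S. \<Sum>r<m. cnj (W c r) * W c r)"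
    using \<rho> by (simp add: mult.commute)
  also have "\<dots> = of_real (\<Sum>c\<in>S. \<Sum>r<m. (cmod (W c r))\<^sup>2)"
    by (simp add: complex_mult_cnj cmod_power2 mult.commute)
  also have "(\<Sum>c\<in>S. \<Sum>r<m. (cmod (W c r))\<^sup>2) = (\<Sum>r<m. \<Sum>c\<in>S. (cmod (W c r))\<^sup>2)"
    by (rule sum.swap)
  finally show ?thesis .
qed

section \<open>Lorentz cone vectors from the unit ball\<close>

definition real_coords :: "('c \<Rightarrow> complex) \<Rightarrow> 'c \<times> bool \<Rightarrow> real" where
  "real_coords f = (\<lambda>(c, re). if re then Re (f c) else Im (f c))"

lemma sum_real_coords:
  "finite P \<Longrightarrow> (\<Sum>t\<in>P \<times> UNIV. real_coords f t * real_coords g t) = Re (cinner P f g)"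
  by (simp add: sum.cartesian_product' UNIV_bool real_coords_def cinner_def add.commute)

text \<open>The witness \<open>V i\<close> is \<open>(1/2, g i / 2)\<close>, with \<open>\<complex>\<^sup>P\<close> read as \<open>\<real>\<^sup>2\<^sup>P\<close> and enumerated by \<open>h\<close>.\<close>
lemma lorentz_gram_of_unit_ball:
  fixes g :: "'i \<Rightarrow> 'c \<Rightarrow> complex"
  assumes fin: "finite P" and norm: "\<And>i. i \<in> I \<Longrightarrow> Re (cinner P (g i) (g i)) \<le> 1"
  shows "\<exists>m V. m \<ge> 1 \<and> (\<forall>i\<in>I. V i \<in> lorentz_cone m) \<and>
     (\<forall>i\<in>I. \<forall>j\<in>I. (\<Sum>k<m. V i k * V j k) = (1 + Re (cinner P (g i) (g j))) / 4)"
proof -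
  let ?T = "P \<times> (UNIV :: bool set)"
  define n where "n = card ?T"
  obtain h where h: "bij_betw h {..<n} ?T"
    using ex_bij_betw_nat_finite[of ?T] fin by (auto simp: n_def atLeast0LessThan)
  define V where "V i k = (if k = 0 then 1/2 else real_coords (g i) (h (k - 1)) / 2)" for i k
  have tail: "(\<Sum>k<n. V i (Suc k) * V j (Suc k)) = Re (cinner P (g i) (g j)) / 4" for i j
  proof -
    have "(\<Sum>k<n. V i (Suc k) * V j (Suc k)) = (\<Sum>k<n. real_coords (g i) (h k) * real_coords (g j) (h k)) / 4"
      by (simp add: V_def sum_divide_distrib)
    also have "(\<Sum>k<n. real_coords (g i) (h k) * real_coords (g j) (h k)) = Re (cinner P (g i) (g j))"
      using sum.reindex_bij_betw[OF h, of "\<lambda>t. real_coords (g i) t * real_coords (g j) t"]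
        sum_real_coords[OF fin] by simp
    finally show ?thesis .
  qed
  have "(\<Sum>k<Suc n. V i k * V j k) = (1 + Re (cinner P (g i) (g j))) / 4" for i j
    unfolding sum.lessThan_Suc_shift tail by (simp add: V_def)
  moreover have "V i \<in> lorentz_cone (Suc n)" if "i \<in> I" for i
  proof -
    have "(\<Sum>k\<in>{1..<Suc n}. (V i k)\<^sup>2) = (\<Sum>k<n. V i (Suc k) * V i (Suc k))"
      by (simp add: sum.shift_bounds_Suc_ivl atLeast0LessThan power2_eq_square del: sum.op_ivl_Suc)
    also have "\<dots> \<le> (1/2)\<^sup>2" using norm[OF that] by (simp add: tail power2_eq_square)
    finally show ?thesis
      unfolding lorentz_cone_def using real_sqrt_le_mono by (fastforce simp: V_def)
  qed
  ultimately show ?thesis by (intro exI[of _ "Suc n"] exI[of _ V]) simp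
qed

section \<open>Unbiased binary behaviors\<close>

definition correlator :: "(int \<Rightarrow> int \<Rightarrow> nat \<Rightarrow> nat \<Rightarrow> real) \<Rightarrow> nat \<Rightarrow> nat \<Rightarrow> real" where
  "correlator p x y = (\<Sum>a\<in>pm1. \<Sum>b\<in>pm1. of_int (a * b) * p a b x y)"

lemma quantum_behavior_pm1_correlation_vectors:
  assumes "quantum_behavior mA mB pm1 pm1 p"
  obtains P :: "(nat \<times> nat \<times> nat) set" and u v :: "nat \<Rightarrow> nat \<times> nat \<times> nat \<Rightarrow> complex"
  where "finite P"
    and "\<And>x. x < mA \<Longrightarrow> Re (cinner P (u x) (u x)) \<le> 1"
    and "\<And>y. y < mB \<Longrightarrow> Re (cinner P (v y) (v y)) \<le> 1"
    and "\<And>x y. x < mA \<Longrightarrow> y < mB \<Longrightarrow> Re (cinner P (u x) (v y)) = correlator p x y"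
proof -
  obtain d :: nat and \<rho> M N where "d \<ge> 1"
    and \<rho>: "psd_on ({..<d} \<times> {..<d}) \<rho>" "(\<Sum>c\<in>{..<d} \<times> {..<d}. \<rho> c c) = 1"
    and M: "\<forall>x<mA. (\<forall>a\<in>pm1. psd_on {..<d} (M x a)) \<and>
                 (\<forall>i<d. \<forall>j<d. (\<Sum>a\<in>pm1. M x a i j) = (if i = j then 1 else 0))"
    and N: "\<forall>y<mB. (\<forall>b\<in>pm1. psd_on {..<d} (N y b)) \<and>
                 (\<forall>i<d. \<forall>j<d. (\<Sum>b\<in>pm1. N y b i j) = (if i = j then 1 else 0))"
    and p: "\<forall>a\<in>pm1. \<forall>b\<in>pm1. \<forall>x<mA. \<forall>y<mB.
              of_real (p a b x y) = tensor_expectation d \<rho> (M x a) (N y b)"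
    using assms unfolding quantum_behavior_def
    by (elim exE conjE) (rule that; (unfold tensor_expectation_def)?; assumption)
  let ?D = "{..<d} \<times> {..<d}"
  obtain m :: nat and W where W: "\<forall>a\<in>?D. \<forall>b\<in>?D. \<rho> a b = (\<Sum>r<m. W a r * cnj (W b r))"
    using psd_on_gram_factorization[OF _ \<rho>(1)] by blast
  have unit: "(\<Sum>r<m. \<Sum>c\<in>?D. (cmod (W c r))\<^sup>2) = 1"
    using gram_trace[OF W, symmetric] unfolding \<rho>(2) of_real_eq_1_iff .
  have M_povm: "binary_povm {..<d} (M x 1) (M x (-1))" if "x < mA" for x
    using M that by (auto simp: binary_povm_def add.commute)
  have N_povm: "binary_povm {..<d} (N y 1) (N y (-1))" if "y < mB" for y
    using N that by (auto simp: binary_povm_def add.commute)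
  define A where "A x = (\<lambda>i j. M x 1 i j - M x (-1) i j)" for x
  define B where "B y = (\<lambda>i j. N y 1 i j - N y (-1) i j)" for y
  define u where "u x = (\<lambda>(r, c). tensor_left d (A x) (\<lambda>c. W c r) c)" for x
  define v where "v y = (\<lambda>(r, c). tensor_right d (B y) (\<lambda>c. W c r) c)" for y
  show ?thesis
  proof (rule that)
    show "finite ({..<m} \<times> ?D)" by simp
  next
    fix x assume "x < mA"
    then show "Re (cinner ({..<m} \<times> ?D) (u x) (u x)) \<le> 1"
      using Re_cinner_tensor_left_le[OF binary_povm_difference_contraction[OF _ M_povm]]
      unfolding u_def A_def unit[symmetric] by simp
  next
    fix y assume "y < mB"
    then show "Re (cinner ({..<m} \<times> ?D) (v y) (v y)) \<le> 1"
      using Re_cinner_tensor_right_le[OF binary_povm_difference_contraction[OF _ N_povm]]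
      unfolding v_def B_def unit[symmetric] by simp
  next
    fix x y assume xy: "x < mA" "y < mB"
    have "cinner ({..<m} \<times> ?D) (u x) (v y) = tensor_expectation d \<rho> (A x) (B y)"
      unfolding u_def v_def cinner_Times
      by (rule tensor_expectation_gram[OF W, symmetric])
        (use binary_povm_difference_hermitian[OF M_povm[OF \<open>x < mA\<close>]] in \<open>simp add: A_def\<close>)
    also have "\<dots> = of_real (correlator p x y)"
      unfolding A_def B_def tensor_expectation_diff_left tensor_expectation_diff_right
      by (simp add: p xy correlator_def)
    finally show "Re (cinner ({..<m} \<times> ?D) (u x) (v y)) = correlator p x y" by simp
  qed
qed

lemma unbiased_pm1_eq_correlator:
  assumes "unbiased mA mB p" "x < mA" "y < mB" "a \<in> pm1" "b \<in> pm1"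
  shows "p a b x y = (1 + of_int (a * b) * correlator p x y) / 4"
proof -
  have "p a' (-1) x y + p a' 1 x y = 1/2" "p (-1) b' x y + p 1 b' x y = 1/2"
    if "a' \<in> pm1" "b' \<in> pm1" for a' b'
    using assms(1-3) that unfolding unbiased_def by auto
  from this[of 1 1] this[of "-1" "-1"] show ?thesis
    using assms(4,5) by (auto simp: correlator_def)
qed

lemma in_A_pm1_of_unbiased:
  assumes "unbiased mA mB p"
    and "\<forall>i\<in>idx_set mA mB pm1 pm1. \<forall>j\<in>idx_set mA mB pm1 pm1. R i j = R j i"
    and "\<And>x a x' a'. x < mA \<Longrightarrow> x' < mA \<Longrightarrow> a \<in> pm1 \<Longrightarrow> a' \<in> pm1 \<Longrightarrow>
           R (Inl (x, a)) (Inl (x', a')) = (1 + of_int (a * a') * cA x x') / 4"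
    and "\<And>y b y' b'. y < mB \<Longrightarrow> y' < mB \<Longrightarrow> b \<in> pm1 \<Longrightarrow> b' \<in> pm1 \<Longrightarrow>
           R (Inr (y, b)) (Inr (y', b')) = (1 + of_int (b * b') * cB y y') / 4"
    and "\<And>x a y b. x < mA \<Longrightarrow> y < mB \<Longrightarrow> a \<in> pm1 \<Longrightarrow> b \<in> pm1 \<Longrightarrow>
           R (Inl (x, a)) (Inr (y, b)) = (1 + of_int (a * b) * correlator p x y) / 4"
  shows "in_A mA mB pm1 pm1 p R"
  unfolding in_A_def using assms(2)
  by (simp add: assms(3-5) unbiased_pm1_eq_correlator[OF assms(1)] add_divide_distrib[symmetric])

theorem theorem4p12:
  fixes mA mB :: nat and p :: "int \<Rightarrow> int \<Rightarrow> nat \<Rightarrow> nat \<Rightarrow> real"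
  assumes "quantum_behavior mA mB pm1 pm1 p"
    and "unbiased mA mB p"
  shows "gram_lorentz_behavior mA mB pm1 pm1 p"
proof -
  let ?I = "idx_set mA mB pm1 pm1"
  obtain P :: "(nat \<times> nat \<times> nat) set" and u v where P: "finite P"
    and u: "\<And>x. x < mA \<Longrightarrow> Re (cinner P (u x) (u x)) \<le> 1"
    and v: "\<And>y. y < mB \<Longrightarrow> Re (cinner P (v y) (v y)) \<le> 1"
    and uv: "\<And>x y. x < mA \<Longrightarrow> y < mB \<Longrightarrow> Re (cinner P (u x) (v y)) = correlator p x y"
    using quantum_behavior_pm1_correlation_vectors[OF assms(1)] by blast
  define g where "g i = (case i of Inl (x, a) \<Rightarrow> (\<lambda>c. of_int a * u x c)
                                | Inr (y, b) \<Rightarrow> (\<lambda>c. of_int b * v y c))" for i :: "(nat \<times> int) + (nat \<times> int)"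
  have "Re (cinner P (g i) (g i)) \<le> 1" if "i \<in> ?I" for i
    using that u v by (auto simp: idx_set_def g_def cinner_minus_left cinner_minus_right)
  then obtain m V where "m \<ge> 1" "\<forall>i\<in>?I. V i \<in> lorentz_cone m"
    and V: "\<forall>i\<in>?I. \<forall>j\<in>?I. (\<Sum>k<m. V i k * V j k) = (1 + Re (cinner P (g i) (g j))) / 4"
    using lorentz_gram_of_unit_ball[OF P] by blast
  define R where "R i j = (\<Sum>k<m. V i k * V j k)" for i j
  have "gram_lorentz ?I R"
    unfolding gram_lorentz_def R_def using \<open>m \<ge> 1\<close> \<open>\<forall>i\<in>?I. V i \<in> lorentz_cone m\<close> by blast
  moreover have "in_A mA mB pm1 pm1 p R"
  proof (rule in_A_pm1_of_unbiased[OF assms(2), where cA = "\<lambda>x x'. Re (cinner P (u x) (u x'))"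
        and cB = "\<lambda>y y'. Re (cinner P (v y) (v y'))"])
    show "\<forall>i\<in>?I. \<forall>j\<in>?I. R i j = R j i" by (simp add: R_def mult.commute)
  qed (auto simp: R_def V idx_set_def g_def cinner_minus_left cinner_minus_right uv)
  ultimately show ?thesis unfolding gram_lorentz_behavior_def using assms(1) by blast
qed

end
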